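(* Let $j\in\mathbb{N}$, $r\in\mathbb{N}_0$, and let $n=p_1^{a_1}\cdots p_t^{a_t}$ with $t\in\mathbb{N}$, distinct primes $p_1,\dots,p_t$ and $a_1,\dots,a_t\in\mathbb{N}$. Then \[\frac{c_j^{(r)}(n)}{d_{j+r}(n)}=\sum_{i=0}^{j}(-1)^i\binom{j}{i}\frac{\binom{j+r-1}{i}^t}{\prod_{k=1}^t\binom{a_k+j+r-1}{i}}={}_{t+1}F_t\big(\underbrace{1-j-r,\dots,1-j-r}_{t},\,-j;\ 1-a_1-j-r,\dots,1-a_t-j-r;\ 1\big).\] Moreover, if $r\ge 1$, \[\frac{c_j^{(r)}(n)}{d_r(n)}=\sum_{i=0}^{j}(-1)^{j-i}\binom{j}{i}\frac{\prod_{k=1}^t\binom{a_k+i+r-1}{i}}{\binom{i+r-1}{i}^t}=(-1)^j\,{}_{t+1}F_t\big(a_1+r,\dots,a_t+r,\,-j;\ \underbrace{r,\dots,r}_{t};\ 1\big).\]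
   Context: For $j,n\in\mathbb{N}$, $d_j(n)$ is the number of ordered $j$-tuples of positive integers with product $n$, and $c_j(n)$ is the number of ordered $j$-tuples of integers each $\ge 2$ with product $n$. The associated divisor functions are defined by $c_j^{(0)}=c_j$ and $c_j^{(r)}(n)=\sum_{m\mid n}c_j^{(r-1)}(m)$ for $r,n\in\mathbb{N}$. The generalised hypergeometric series is ${}_{p}F_q(\alpha_1,\dots,\alpha_p;\beta_1,\dots,\beta_q;z)=\sum_{i=0}^\infty\frac{\alpha_1^{\overline i}\cdots\alpha_p^{\overline i}z^i}{\beta_1^{\overline i}\cdots\beta_q^{\overline i}\,i!}$ with rising factorial $x^{\overline i}=\prod_{l=0}^{i-1}(x+l)$, $x^{\overline 0}=1$; the series above terminate after the term $i=j$ because $(-j)^{\overline i}=0$ for $i>j$. *)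

theory Defs
  imports Complex_Main "HOL-Computational_Algebra.Primes"
begin

definition d_fun :: "nat \<Rightarrow> nat \<Rightarrow> nat" where
  "d_fun j n = card {xs :: nat list. length xs = j \<and> (\<forall>x\<in>set xs. x \<ge> 1) \<and> prod_list xs = n}"

definition c_fun :: "nat \<Rightarrow> nat \<Rightarrow> nat" where
  "c_fun j n = card {xs :: nat list. length xs = j \<and> (\<forall>x\<in>set xs. x \<ge> 2) \<and> prod_list xs = n}"

fun c_iter :: "nat \<Rightarrow> nat \<Rightarrow> nat \<Rightarrow> nat" where
  "c_iter 0 j n = c_fun j n"
| "c_iter (Suc r) j n = (\<Sum>m\<in>{m. m dvd n}. c_iter r j m)"

definition hypergeom :: "real list \<Rightarrow> real list \<Rightarrow> real \<Rightarrow> real" where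
  "hypergeom as bs z =
     (\<Sum>i. (\<Prod>a\<leftarrow>as. pochhammer a i) * z ^ i / ((\<Prod>b\<leftarrow>bs. pochhammer b i) * fact i))"

end

theory Submission
  imports Defs "HOL-Library.FuncSet"
begin

text \<open>Removing the first entry of a tuple gives d_{j+1}(n) = sum_{m | n} d_j(m) and
  c_{j+1}(n) = sum_{m | n, m < n} c_j(m); by induction,
  c_j^(r)(n) = sum_i (-1)^(j-i) C(j,i) d_{i+r}(n).
  Since d_m is multiplicative with d_m(p^a) = C(a+m-1, a), the quotients
  d_{j+r-i}(n) / d_{j+r}(n) and d_{i+r}(n) / d_r(n) are products of ratios of binomial
  coefficients, which the trinomial revision C(a+b+c, a) C(b+c, b) = C(a+b+c, b) C(a+c, a)
  brings into the stated form. Writing the binomial coefficients as rising factorials at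
  (negated) natural numbers identifies both sums with terminating hypergeometric series.\<close>

definition tuples_with_product :: "nat \<Rightarrow> nat \<Rightarrow> nat \<Rightarrow> nat list set" where
  "tuples_with_product lo m n = {xs. length xs = m \<and> (\<forall>x\<in>set xs. lo \<le> x) \<and> prod_list xs = n}"

lemma d_fun_eq_card: "d_fun m n = card (tuples_with_product 1 m n)"
  by (simp add: d_fun_def tuples_with_product_def)

lemma c_fun_eq_card: "c_fun m n = card (tuples_with_product 2 m n)"
  by (simp add: c_fun_def tuples_with_product_def)

lemma finite_tuples_with_product:
  assumes "0 < n"
  shows "finite (tuples_with_product lo m n)"
proof (rule finite_subset)
  show "tuples_with_product lo m n \<subseteq> {xs. set xs \<subseteq> {..n} \<and> length xs = m}"
    using assms by (auto simp: tuples_with_product_def intro: dvd_imp_le dest: prod_list_dvd)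
  show "finite {xs. set xs \<subseteq> {..n} \<and> length xs = m}"
    by (rule finite_lists_length_eq) simp
qed

lemma tuples_with_product_0: "tuples_with_product lo 0 n = (if n = 1 then {[]} else {})"
  by (auto simp: tuples_with_product_def)

lemma tuples_with_product_Suc:
  assumes "0 < n"
  shows "tuples_with_product lo (Suc m) n
           = (\<Union>x\<in>{x. x dvd n \<and> lo \<le> n div x}. (#) (n div x) ` tuples_with_product lo m x)"
proof (intro equalityI subsetI)
  fix xs assume "xs \<in> tuples_with_product lo (Suc m) n"
  then obtain y ys where xs: "xs = y # ys" and ys: "ys \<in> tuples_with_product lo m (prod_list ys)"
    and "lo \<le> y" and prod: "y * prod_list ys = n"
    by (cases xs) (auto simp: tuples_with_product_def)
  moreover have "n div prod_list ys = y"
    using prod assms by (cases "prod_list ys = 0") auto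
  ultimately show "xs \<in> (\<Union>x\<in>{x. x dvd n \<and> lo \<le> n div x}. (#) (n div x) ` tuples_with_product lo m x)"
    by (auto intro!: dvdI[of _ _ y] simp: mult.commute)
qed (auto simp: tuples_with_product_def)

lemma card_tuples_with_product_Suc:
  assumes "0 < n"
  shows "card (tuples_with_product lo (Suc m) n)
           = (\<Sum>x | x dvd n \<and> lo \<le> n div x. card (tuples_with_product lo m x))"
proof -
  have "finite {x. x dvd n \<and> lo \<le> n div x}"
    using assms by (auto intro: finite_subset[of _ "{..n}"] dvd_imp_le)
  then have "card (tuples_with_product lo (Suc m) n)
      = (\<Sum>x | x dvd n \<and> lo \<le> n div x. card ((#) (n div x) ` tuples_with_product lo m x))"
    unfolding tuples_with_product_Suc[OF assms] using assms
    by (intro card_UN_disjoint)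
      (auto intro!: finite_tuples_with_product dest: dvd_pos_nat, auto simp: tuples_with_product_def)
  then show ?thesis
    by (simp add: card_image)
qed

lemma d_fun_0: "d_fun 0 n = (if n = 1 then 1 else 0)"
  by (simp add: d_fun_eq_card tuples_with_product_0)

lemma c_fun_0: "c_fun 0 n = (if n = 1 then 1 else 0)"
  by (simp add: c_fun_eq_card tuples_with_product_0)

lemma d_fun_Suc:
  assumes "0 < n"
  shows "d_fun (Suc m) n = (\<Sum>x | x dvd n. d_fun m x)"
proof -
  have "{x. x dvd n \<and> 1 \<le> n div x} = {x. x dvd n}"
    using assms by (auto simp: Suc_le_eq dest: dvd_pos_nat)
  then show ?thesis
    by (simp add: d_fun_eq_card card_tuples_with_product_Suc[OF assms])
qed

lemma c_fun_Suc:
  assumes "0 < n"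
  shows "real (c_fun (Suc m) n) = (\<Sum>x | x dvd n. real (c_fun m x)) - real (c_fun m n)"
proof -
  have "{x. x dvd n \<and> 2 \<le> n div x} = {x. x dvd n} - {n}"
  proof (intro equalityI subsetI)
    fix x assume x: "x \<in> {x. x dvd n} - {n}"
    then obtain k where "n = x * k" by auto
    with assms x have "k \<noteq> 0" "k \<noteq> 1" "0 < x" by auto
    with \<open>n = x * k\<close> show "x \<in> {x. x dvd n \<and> 2 \<le> n div x}" by auto
  qed (use assms in auto)
  then have "c_fun (Suc m) n = (\<Sum>x\<in>{x. x dvd n} - {n}. c_fun m x)"
    by (simp add: c_fun_eq_card card_tuples_with_product_Suc[OF assms])
  then show ?thesis
    using assms by (simp add: sum_diff1 finite_divisors_nat of_nat_diff)
qed

lemma alternating_binomial_sum_Suc: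
  fixes f :: "nat \<Rightarrow> 'a::comm_ring_1"
  shows "(\<Sum>i\<le>Suc j. (-1) ^ (Suc j - i) * of_nat (Suc j choose i) * f i)
       = (\<Sum>i\<le>j. (-1) ^ (j - i) * of_nat (j choose i) * f (Suc i))
         - (\<Sum>i\<le>j. (-1) ^ (j - i) * of_nat (j choose i) * f i)"
proof -
  \<comment> \<open>Pascal's rule splits off the part with \<open>j choose Suc i\<close>, which together with the
    term \<open>i = 0\<close> is the alternating sum of \<open>f\<close> itself, up to sign.\<close>
  define g where
    "g = (-1) ^ Suc j * f 0 + (\<Sum>i\<le>j. (-1) ^ (j - i) * of_nat (j choose Suc i) * f (Suc i))"
  have "(\<Sum>i\<le>Suc j. (-1) ^ (Suc j - i) * of_nat (Suc j choose i) * f i)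
      = g + (\<Sum>i\<le>j. (-1) ^ (j - i) * of_nat (j choose i) * f (Suc i))"
    by (subst sum.atMost_Suc_shift) (simp add: g_def algebra_simps sum.distrib)
  moreover have "g = (\<Sum>i\<le>Suc j. (-1) ^ (Suc j - i) * of_nat (j choose i) * f i)"
    by (subst sum.atMost_Suc_shift) (simp add: g_def)
  moreover have "\<dots> = - (\<Sum>i\<le>j. (-1) ^ (j - i) * of_nat (j choose i) * f i)"
    by (simp add: Suc_diff_le sum_negf binomial_eq_0)
  ultimately show ?thesis
    by simp
qed

lemma sum_divisors_d_fun_combination:
  assumes "0 < n"
  shows "(\<Sum>x | x dvd n. \<Sum>i\<in>I. w i * real (d_fun (g i) x))
           = (\<Sum>i\<in>I. w i * real (d_fun (Suc (g i)) n))"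
  by (simp add: d_fun_Suc[OF assms] sum.swap[of _ "{x. x dvd n}"] sum_distrib_left)

lemma c_fun_eq_alternating_sum:
  assumes "0 < n"
  shows "real (c_fun j n) = (\<Sum>i\<le>j. (-1) ^ (j - i) * real (j choose i) * real (d_fun i n))"
  using assms
proof (induction j arbitrary: n)
  case 0
  then show ?case
    by (simp add: c_fun_0 d_fun_0)
next
  case (Suc j)
  have "real (c_fun (Suc j) n) = (\<Sum>x | x dvd n. real (c_fun j x)) - real (c_fun j n)"
    using c_fun_Suc[OF Suc.prems] .
  also have "(\<Sum>x | x dvd n. real (c_fun j x))
      = (\<Sum>x | x dvd n. \<Sum>i\<le>j. (-1) ^ (j - i) * real (j choose i) * real (d_fun i x))"
    using Suc.prems by (intro sum.cong refl Suc.IH) (auto dest: dvd_pos_nat)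
  also have "\<dots> = (\<Sum>i\<le>j. (-1) ^ (j - i) * real (j choose i) * real (d_fun (Suc i) n))"
    using sum_divisors_d_fun_combination[OF Suc.prems] .
  finally show ?case
    using Suc.IH[OF Suc.prems] alternating_binomial_sum_Suc[of j "\<lambda>i. real (d_fun i n)"] by simp
qed

lemma c_iter_eq_alternating_sum:
  assumes "0 < n"
  shows "real (c_iter r j n) = (\<Sum>i\<le>j. (-1) ^ (j - i) * real (j choose i) * real (d_fun (i + r) n))"
  using assms
proof (induction r arbitrary: n)
  case 0
  then show ?case
    by (simp add: c_fun_eq_alternating_sum)
next
  case (Suc r)
  have "real (c_iter (Suc r) j n)
      = (\<Sum>x | x dvd n. \<Sum>i\<le>j. (-1) ^ (j - i) * real (j choose i) * real (d_fun (i + r) x))"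
    using Suc.prems by (simp, intro sum.cong refl Suc.IH) (auto dest: dvd_pos_nat)
  also have "\<dots> = (\<Sum>i\<le>j. (-1) ^ (j - i) * real (j choose i) * real (d_fun (i + Suc r) n))"
    using sum_divisors_d_fun_combination[OF Suc.prems] by simp
  finally show ?case .
qed

lemma c_iter_eq_alternating_sum_rev:
  assumes "0 < n"
  shows "real (c_iter r j n) = (\<Sum>i\<le>j. (-1) ^ i * real (j choose i) * real (d_fun (j + r - i) n))"
proof -
  have "real (c_iter r j n)
      = (\<Sum>i=0..j. (-1) ^ (j - (j - i)) * real (j choose (j - i)) * real (d_fun (j - i + r) n))"
    unfolding c_iter_eq_alternating_sum[OF assms] atLeast0AtMost[symmetric]
    by (subst sum.atLeastAtMost_rev) simp
  also have "\<dots> = (\<Sum>i\<le>j. (-1) ^ i * real (j choose i) * real (d_fun (j + r - i) n))"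
    unfolding atLeast0AtMost by (intro sum.cong refl) (auto simp: binomial_symmetric[symmetric])
  finally show ?thesis .
qed

lemma sum_choose_pred_lower: "(\<Sum>e\<le>A. (e + m - 1) choose e) = (A + m) choose A"
proof (cases m)
  case 0
  then have "(\<Sum>e\<le>A. (e + m - 1) choose e) = (\<Sum>e\<in>{0}. (e + m - 1) choose e)"
    by (intro sum.mono_neutral_right) auto
  then show ?thesis
    using 0 by simp
next
  case (Suc m')
  then show ?thesis
    using sum_choose_lower[of m' A] by (simp add: add.commute)
qed

lemma bij_betw_divisors_multiplicities:
  fixes n :: nat
  assumes "0 < n"
  shows "bij_betw (\<lambda>x. restrict (\<lambda>p. multiplicity p x) (prime_factors n)) {x. x dvd n}
           (\<Pi>\<^sub>E p\<in>prime_factors n. {..multiplicity p n})"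
proof (rule bij_betw_byWitness[where f' = "\<lambda>e. \<Prod>p\<in>prime_factors n. p ^ e p"])
  have multiplicity_prod [simp]:
    "multiplicity q (\<Prod>p\<in>prime_factors n. p ^ e p) = (if q \<in> prime_factors n then e q else 0)"
    if "prime q" for q e
    using that by (intro multiplicity_prod_prime_powers) auto
  have prod_nonzero [simp]: "(\<Prod>p\<in>prime_factors n. p ^ e p) \<noteq> 0" for e :: "nat \<Rightarrow> nat"
    by (auto simp: prod_zero_iff dest: in_prime_factors_imp_prime)
  show "\<forall>x\<in>{x. x dvd n}. (\<Prod>p\<in>prime_factors n. p ^ restrict (\<lambda>p. multiplicity p x) (prime_factors n) p) = x"
  proof
    fix x assume "x \<in> {x. x dvd n}"
    then have "x dvd n" "x \<noteq> 0"
      using assms by auto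
    have "multiplicity q x = 0" if "prime q" "q \<notin> prime_factors n" for q
      using that \<open>x dvd n\<close> assms
      by (auto intro!: not_dvd_imp_multiplicity_0 simp: in_prime_factors_iff dest: dvd_trans)
    then have "normalize (\<Prod>p\<in>prime_factors n. p ^ restrict (\<lambda>p. multiplicity p x) (prime_factors n) p)
        = normalize x"
      using \<open>x \<noteq> 0\<close> by (intro multiplicity_eq_imp_eq) auto
    then show "(\<Prod>p\<in>prime_factors n. p ^ restrict (\<lambda>p. multiplicity p x) (prime_factors n) p) = x"
      by simp
  qed
  show "\<forall>e\<in>\<Pi>\<^sub>E p\<in>prime_factors n. {..multiplicity p n}.
          restrict (\<lambda>p. multiplicity p (\<Prod>p\<in>prime_factors n. p ^ e p)) (prime_factors n) = e"
    by (auto simp: PiE_def extensional_def in_prime_factors_iff)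
  show "(\<lambda>x. restrict (\<lambda>p. multiplicity p x) (prime_factors n)) ` {x. x dvd n}
          \<subseteq> (\<Pi>\<^sub>E p\<in>prime_factors n. {..multiplicity p n})"
    using assms by (auto intro: dvd_imp_multiplicity_le)
  show "(\<lambda>e. \<Prod>p\<in>prime_factors n. p ^ e p) ` (\<Pi>\<^sub>E p\<in>prime_factors n. {..multiplicity p n})
          \<subseteq> {x. x dvd n}"
    by (auto intro!: multiplicity_le_imp_dvd simp: PiE_def Pi_def dest: prime_factors_gt_0_nat)
qed

lemma sum_divisors_prod_multiplicity:
  fixes n :: nat and g :: "nat \<Rightarrow> nat \<Rightarrow> 'a::comm_semiring_1"
  assumes "0 < n"
  shows "(\<Sum>x | x dvd n. \<Prod>p\<in>prime_factors n. g p (multiplicity p x))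
           = (\<Prod>p\<in>prime_factors n. \<Sum>e\<le>multiplicity p n. g p e)"
proof -
  have "(\<Prod>p\<in>prime_factors n. \<Sum>e\<le>multiplicity p n. g p e)
      = (\<Sum>e\<in>(\<Pi>\<^sub>E p\<in>prime_factors n. {..multiplicity p n}). \<Prod>p\<in>prime_factors n. g p (e p))"
    by (rule prod_sum_PiE) auto
  also have "\<dots> = (\<Sum>x | x dvd n. \<Prod>p\<in>prime_factors n. g p (multiplicity p x))"
    by (subst sum.reindex_bij_betw[OF bij_betw_divisors_multiplicities[OF assms], symmetric])
      (auto intro!: sum.cong prod.cong)
  finally show ?thesis ..
qed

lemma d_fun_prime_factorization:
  assumes "0 < n"
  shows "d_fun m n = (\<Prod>p\<in>prime_factors n. (multiplicity p n + m - 1) choose multiplicity p n)"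
  using assms
proof (induction m arbitrary: n)
  case 0
  show ?case
  proof (cases "n = 1")
    case False
    then obtain p where p: "p \<in> prime_factors n"
      using 0 by (metis prime_factor_nat prime_factorsI not_gr0)
    then have "0 < multiplicity p n"
      by (simp add: prime_factors_multiplicity)
    then have "(\<Prod>q\<in>prime_factors n. (multiplicity q n + 0 - 1) choose multiplicity q n) = 0"
      using p by (intro prod_zero bexI[OF _ p]) simp_all
    then show ?thesis
      using False by (simp add: d_fun_0)
  qed (simp add: d_fun_0)
next
  case (Suc m)
  have "d_fun (Suc m) n = (\<Sum>x | x dvd n. d_fun m x)"
    using d_fun_Suc[OF Suc.prems] .
  also have "\<dots> = (\<Sum>x | x dvd n. \<Prod>p\<in>prime_factors n. (multiplicity p x + m - 1) choose multiplicity p x)"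
  proof (intro sum.cong refl)
    fix x assume "x \<in> {x. x dvd n}"
    then have "0 < x" "prime_factors x \<subseteq> prime_factors n"
      using Suc.prems by (auto simp: in_prime_factors_iff intro: dvd_trans dvd_pos_nat)
    then have "d_fun m x = (\<Prod>p\<in>prime_factors x. (multiplicity p x + m - 1) choose multiplicity p x)"
      by (intro Suc.IH)
    also have "\<dots> = (\<Prod>p\<in>prime_factors n. (multiplicity p x + m - 1) choose multiplicity p x)"
      using \<open>prime_factors x \<subseteq> prime_factors n\<close>
      by (intro prod.mono_neutral_left[OF finite_set_mset]) (auto simp: prime_factors_multiplicity)
    finally show "d_fun m x = \<dots>" .
  qed
  also have "\<dots> = (\<Prod>p\<in>prime_factors n. \<Sum>e\<le>multiplicity p n. (e + m - 1) choose e)"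
    by (rule sum_divisors_prod_multiplicity[OF Suc.prems])
  also have "\<dots> = (\<Prod>p\<in>prime_factors n. (multiplicity p n + Suc m - 1) choose multiplicity p n)"
    by (simp only: sum_choose_pred_lower) simp
  finally show ?case .
qed

lemma d_fun_prod_prime_powers:
  fixes K :: "'k set" and p a :: "'k \<Rightarrow> nat"
  assumes "finite K" "inj_on p K" "\<And>k. k \<in> K \<Longrightarrow> prime (p k)"
  shows "d_fun m (\<Prod>k\<in>K. p k ^ a k) = (\<Prod>k\<in>K. (a k + m - 1) choose a k)"
proof -
  define e where "e q = a (the_inv_into K p q)" for q
  define N where "N = (\<Prod>q\<in>p ` K. q ^ e q)"
  have e: "e (p k) = a k" if "k \<in> K" for k
    using that assms(2) by (simp add: e_def the_inv_into_f_f)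
  have primes: "\<And>q. q \<in> p ` K \<Longrightarrow> prime q"
    using assms(3) by auto
  have N: "(\<Prod>k\<in>K. p k ^ a k) = N"
    using assms(2) by (simp add: N_def prod.reindex e)
  have "0 < N"
    using primes by (simp add: N_def prod_pos prime_gt_0_nat)
  have multiplicity: "multiplicity q N = (if q \<in> p ` K then e q else 0)" if "prime q" for q
    unfolding N_def using assms(1) primes that by (intro multiplicity_prod_prime_powers) auto
  have "d_fun m N = (\<Prod>q\<in>prime_factors N. (multiplicity q N + m - 1) choose multiplicity q N)"
    using d_fun_prime_factorization[OF \<open>0 < N\<close>] .
  also have "\<dots> = (\<Prod>q\<in>p ` K. (e q + m - 1) choose e q)"
  proof (rule prod.mono_neutral_cong_left)
    show "prime_factors N \<subseteq> p ` K"
      using multiplicity by (auto simp: prime_factors_multiplicity split: if_splits)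
    have "e q = 0" if "q \<in> p ` K" "q \<notin> prime_factors N" for q
      using that multiplicity[OF primes[OF that(1)]] primes[OF that(1)]
      by (simp add: prime_factors_multiplicity)
    then show "\<forall>q\<in>p ` K - prime_factors N. (e q + m - 1) choose e q = 1"
      by simp
    show "(multiplicity q N + m - 1) choose multiplicity q N = (e q + m - 1) choose e q"
      if "q \<in> prime_factors N" for q
      using that multiplicity by (auto simp: prime_factors_multiplicity split: if_splits)
  qed (use assms(1) in simp)
  finally show ?thesis
    using assms(2) by (simp add: N prod.reindex e)
qed

lemma choose_trinomial:
  "((a + b + c) choose a) * ((b + c) choose b) = ((a + b + c) choose b) * ((a + c) choose a)"
  using choose_mult_lemma[of c a b] binomial_symmetric[of a "a + c"]
    binomial_symmetric[of a "a + b + c"] by (simp add: ac_simps)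

lemma choose_trinomial_ratio:
  "real ((a + c) choose a) / real ((a + b + c) choose a)
     = real ((b + c) choose b) / real ((a + b + c) choose b)"
proof -
  have "real ((a + c) choose a) * real ((a + b + c) choose b)
      = real ((b + c) choose b) * real ((a + b + c) choose a)"
    using choose_trinomial[of a b c] by (simp flip: of_nat_mult add: ac_simps)
  then show ?thesis
    by (simp add: frac_eq_eq)
qed

lemma choose_ratio_shift_down:
  assumes "i \<le> N" "1 \<le> N" "1 \<le> a"
  shows "real ((a + (N - i) - 1) choose a) / real ((a + N - 1) choose a)
           = real ((N - 1) choose i) / real ((a + N - 1) choose i)"
proof (cases "i = N")
  case True
  then show ?thesis
    using assms by (simp add: binomial_eq_0)
next
  case False
  define c where "c = N - 1 - i"
  have "a + (N - i) - 1 = a + c" "a + N - 1 = a + i + c" "N - 1 = i + c"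
    using assms False by (auto simp: c_def)
  then show ?thesis
    using choose_trinomial_ratio[of a c i] by simp
qed

lemma choose_ratio_shift_up:
  assumes "1 \<le> r"
  shows "real ((a + (i + r) - 1) choose a) / real ((a + r - 1) choose a)
           = real ((a + i + r - 1) choose i) / real ((i + r - 1) choose i)"
proof -
  have "a + (i + r) - 1 = a + i + (r - 1)" "a + i + r - 1 = a + i + (r - 1)"
    "a + r - 1 = a + (r - 1)" "i + r - 1 = i + (r - 1)"
    using assms by auto
  then show ?thesis
    using arg_cong[OF choose_trinomial_ratio[of a "r - 1" i], of inverse] by simp
qed

lemma prod_choose_ratio_shift_down:
  fixes a :: "'k \<Rightarrow> nat"
  assumes "i \<le> N" "1 \<le> N" "\<And>k. k \<in> K \<Longrightarrow> 1 \<le> a k"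
  shows "(\<Prod>k\<in>K. real ((a k + (N - i) - 1) choose a k)) / (\<Prod>k\<in>K. real ((a k + N - 1) choose a k))
           = real ((N - 1) choose i) ^ card K / (\<Prod>k\<in>K. real ((a k + N - 1) choose i))"
proof -
  have "(\<Prod>k\<in>K. real ((a k + (N - i) - 1) choose a k) / real ((a k + N - 1) choose a k))
      = (\<Prod>k\<in>K. real ((N - 1) choose i) / real ((a k + N - 1) choose i))"
    using assms by (intro prod.cong refl choose_ratio_shift_down) auto
  then show ?thesis
    by (simp add: prod_dividef)
qed

lemma prod_choose_ratio_shift_up:
  fixes a :: "'k \<Rightarrow> nat"
  assumes "1 \<le> r"
  shows "(\<Prod>k\<in>K. real ((a k + (i + r) - 1) choose a k)) / (\<Prod>k\<in>K. real ((a k + r - 1) choose a k))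
           = (\<Prod>k\<in>K. real ((a k + i + r - 1) choose i)) / real ((i + r - 1) choose i) ^ card K"
proof -
  have "(\<Prod>k\<in>K. real ((a k + (i + r) - 1) choose a k) / real ((a k + r - 1) choose a k))
      = (\<Prod>k\<in>K. real ((a k + i + r - 1) choose i) / real ((i + r - 1) choose i))"
    using assms by (intro prod.cong refl choose_ratio_shift_up)
  then show ?thesis
    by (simp add: prod_dividef)
qed

lemma c_iter_div_d_fun_add_prime_powers:
  fixes K :: "'k set" and p a :: "'k \<Rightarrow> nat"
  assumes "finite K" "inj_on p K" "\<And>k. k \<in> K \<Longrightarrow> prime (p k)" "\<And>k. k \<in> K \<Longrightarrow> 1 \<le> a k"
    and "1 \<le> j + r"
  defines "n \<equiv> \<Prod>k\<in>K. p k ^ a k"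
  shows "real (c_iter r j n) / real (d_fun (j + r) n)
           = (\<Sum>i\<le>j. (-1) ^ i * real (j choose i) * real ((j + r - 1) choose i) ^ card K
                 / (\<Prod>k\<in>K. real ((a k + j + r - 1) choose i)))"
proof -
  have "0 < n"
    using assms(3) by (simp add: n_def prod_pos prime_gt_0_nat)
  have d: "real (d_fun m n) = (\<Prod>k\<in>K. real ((a k + m - 1) choose a k))" for m
    using d_fun_prod_prime_powers[OF assms(1-3)] by (simp add: n_def)
  have "real (c_iter r j n) / real (d_fun (j + r) n)
      = (\<Sum>i\<le>j. (-1) ^ i * real (j choose i) * (real (d_fun (j + r - i) n) / real (d_fun (j + r) n)))"
    by (simp add: c_iter_eq_alternating_sum_rev[OF \<open>0 < n\<close>] sum_divide_distrib)
  also have "\<dots> = (\<Sum>i\<le>j. (-1) ^ i * real (j choose i) * real ((j + r - 1) choose i) ^ card K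
                 / (\<Prod>k\<in>K. real ((a k + j + r - 1) choose i)))"
    using assms(4,5) prod_choose_ratio_shift_down[of _ "j + r" K a]
    by (auto simp: d add.assoc intro!: sum.cong)
  finally show ?thesis .
qed

lemma c_iter_div_d_fun_prime_powers:
  fixes K :: "'k set" and p a :: "'k \<Rightarrow> nat"
  assumes "finite K" "inj_on p K" "\<And>k. k \<in> K \<Longrightarrow> prime (p k)" and "1 \<le> r"
  defines "n \<equiv> \<Prod>k\<in>K. p k ^ a k"
  shows "real (c_iter r j n) / real (d_fun r n)
           = (\<Sum>i\<le>j. (-1) ^ (j - i) * real (j choose i) * (\<Prod>k\<in>K. real ((a k + i + r - 1) choose i))
                 / real ((i + r - 1) choose i) ^ card K)"
proof -
  have "0 < n"
    using assms(3) by (simp add: n_def prod_pos prime_gt_0_nat)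
  have d: "real (d_fun m n) = (\<Prod>k\<in>K. real ((a k + m - 1) choose a k))" for m
    using d_fun_prod_prime_powers[OF assms(1-3)] by (simp add: n_def)
  have "real (c_iter r j n) / real (d_fun r n)
      = (\<Sum>i\<le>j. (-1) ^ (j - i) * real (j choose i) * (real (d_fun (i + r) n) / real (d_fun r n)))"
    by (simp add: c_iter_eq_alternating_sum[OF \<open>0 < n\<close>] sum_divide_distrib)
  then show ?thesis
    unfolding d prod_choose_ratio_shift_up[OF assms(4)] times_divide_eq_right .
qed

lemma pochhammer_minus_of_nat:
  "pochhammer (- of_nat m :: 'a::field_char_0) i = (-1) ^ i * fact i * of_nat (m choose i)"
  by (simp add: binomial_gbinomial gbinomial_pochhammer)

lemma pochhammer_of_nat_eq_fact_choose:
  "pochhammer (of_nat m :: 'a::field_char_0) i = fact i * of_nat ((m + i - 1) choose i)"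
proof (cases m)
  case 0
  then show ?thesis
    by (simp add: pochhammer_0_left)
next
  case (Suc m')
  then show ?thesis
    by (simp add: binomial_gbinomial gbinomial_pochhammer' of_nat_diff add.commute)
qed

lemma hypergeom_terminating:
  assumes "- real j \<in> set as"
  shows "hypergeom as bs z
           = (\<Sum>i\<le>j. (\<Prod>a\<leftarrow>as. pochhammer a i) * z ^ i / ((\<Prod>b\<leftarrow>bs. pochhammer b i) * fact i))"
proof -
  have "(\<Prod>a\<leftarrow>as. pochhammer a i) = 0" if "j < i" for i
  proof -
    have "pochhammer (- real j) i = 0"
      using that by (simp add: pochhammer_of_nat_eq_0_iff)
    then show ?thesis
      using assms by (force simp: prod_list_zero_iff)
  qed
  then show ?thesis
    unfolding hypergeom_def by (subst suminf_finite[of "{..j}"]) auto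
qed

lemma prod_list_map_upt_Suc: "prod_list (map f [1..<t+1]) = (\<Prod>k=1..t. f k)"
proof -
  have "set [1..<t+1] = {1..t}"
    by auto
  then show ?thesis
    by (metis distinct_upt prod.distinct_set_conv_list)
qed

lemma hypergeom_minus_of_nat_params:
  "hypergeom (replicate t (- real M) @ [- real j]) (map (\<lambda>k. - real (b k)) [1..<t+1]) 1
     = (\<Sum>i\<le>j. (-1) ^ i * real (j choose i) * real (M choose i) ^ t / (\<Prod>k=1..t. real (b k choose i)))"
proof -
  have summand: "(\<Prod>x\<leftarrow>replicate t (- real M) @ [- real j]. pochhammer x i) * 1 ^ i
        / ((\<Prod>x\<leftarrow>map (\<lambda>k. - real (b k)) [1..<t+1]. pochhammer x i) * fact i)
      = (-1) ^ i * real (j choose i) * real (M choose i) ^ t / (\<Prod>k=1..t. real (b k choose i))"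
    (is "?summand = _") for i
  proof -
    define X :: real where "X = (-1) ^ i * fact i"
    have "X \<noteq> 0"
      by (simp add: X_def)
    have "?summand = (X ^ t * fact i) * ((-1) ^ i * real (j choose i) * real (M choose i) ^ t)
        / ((X ^ t * fact i) * (\<Prod>k=1..t. real (b k choose i)))"
      unfolding map_map prod_list_map_upt_Suc
      by (simp add: o_def pochhammer_minus_of_nat prod.distrib X_def power_mult_distrib ac_simps)
    then show ?thesis
      using \<open>X \<noteq> 0\<close> by simp
  qed
  show ?thesis
    by (subst hypergeom_terminating[of j]) (simp, intro sum.cong refl summand)
qed

lemma hypergeom_of_nat_params:
  "(-1) ^ j * hypergeom (map (\<lambda>k. real (b k)) [1..<t+1] @ [- real j]) (replicate t (real r)) 1
     = (\<Sum>i\<le>j. (-1) ^ (j - i) * real (j choose i) * (\<Prod>k=1..t. real ((b k + i - 1) choose i))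
                 / real ((i + r - 1) choose i) ^ t)"
proof -
  have summand: "(\<Prod>x\<leftarrow>map (\<lambda>k. real (b k)) [1..<t+1] @ [- real j]. pochhammer x i) * 1 ^ i
        / ((\<Prod>x\<leftarrow>replicate t (real r). pochhammer x i) * fact i)
      = (-1) ^ i * real (j choose i) * (\<Prod>k=1..t. real ((b k + i - 1) choose i))
        / real ((i + r - 1) choose i) ^ t"
    (is "?summand = _") for i
  proof -
    have "?summand = (fact i ^ t * fact i) * ((-1) ^ i * real (j choose i) * (\<Prod>k=1..t. real ((b k + i - 1) choose i)))
        / ((fact i ^ t * fact i) * real ((i + r - 1) choose i) ^ t)"
      unfolding map_append prod_list.append map_map prod_list_map_upt_Suc
      by (simp add: o_def pochhammer_minus_of_nat pochhammer_of_nat_eq_fact_choose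
          prod.distrib power_mult_distrib ac_simps)
    then show ?thesis
      by simp
  qed
  have sign: "(-1::real) ^ j * (-1) ^ i = (-1) ^ (j - i)" if "i \<le> j" for i
    using that by (simp add: power_add[symmetric] neg_one_power_add_eq_neg_one_power_diff)
  have "(-1) ^ j * hypergeom (map (\<lambda>k. real (b k)) [1..<t+1] @ [- real j]) (replicate t (real r)) 1
      = (\<Sum>i\<le>j. (-1) ^ j * ((-1) ^ i * real (j choose i) * (\<Prod>k=1..t. real ((b k + i - 1) choose i))
          / real ((i + r - 1) choose i) ^ t))"
    by (subst hypergeom_terminating[of j]) (simp, simp only: sum_distrib_left summand)
  also have "\<dots> = (\<Sum>i\<le>j. (-1) ^ (j - i) * real (j choose i) * (\<Prod>k=1..t. real ((b k + i - 1) choose i))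
                 / real ((i + r - 1) choose i) ^ t)"
    by (intro sum.cong refl) (simp add: sign[symmetric])
  finally show ?thesis .
qed

theorem theorem2:
  fixes j r t n :: nat and p a :: "nat \<Rightarrow> nat"
  assumes "j \<ge> 1" and "t \<ge> 1"
    and "\<And>k. k \<in> {1..t} \<Longrightarrow> prime (p k)"
    and "inj_on p {1..t}"
    and "\<And>k. k \<in> {1..t} \<Longrightarrow> a k \<ge> 1"
    and "n = (\<Prod>k=1..t. p k ^ a k)"
  shows "real (c_iter r j n) / real (d_fun (j + r) n)
           = (\<Sum>i=0..j. (-1) ^ i * real (j choose i) * real ((j + r - 1) choose i) ^ t
                 / (\<Prod>k=1..t. real ((a k + j + r - 1) choose i)))
       \<and> real (c_iter r j n) / real (d_fun (j + r) n)
           = hypergeom (replicate t (1 - real j - real r) @ [- real j])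
                       (map (\<lambda>k. 1 - real (a k) - real j - real r) [1..<t+1]) 1
       \<and> (r \<ge> 1 \<longrightarrow>
            real (c_iter r j n) / real (d_fun r n)
              = (\<Sum>i=0..j. (-1) ^ (j - i) * real (j choose i)
                   * (\<Prod>k=1..t. real ((a k + i + r - 1) choose i))
                   / real ((i + r - 1) choose i) ^ t)
          \<and> real (c_iter r j n) / real (d_fun r n)
              = (-1) ^ j * hypergeom (map (\<lambda>k. real (a k) + real r) [1..<t+1] @ [- real j])
                                    (replicate t (real r)) 1)"
proof -
  have shift_down: "real (c_iter r j n) / real (d_fun (j + r) n)
      = (\<Sum>i=0..j. (-1) ^ i * real (j choose i) * real ((j + r - 1) choose i) ^ t
          / (\<Prod>k=1..t. real ((a k + j + r - 1) choose i)))"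
    using c_iter_div_d_fun_add_prime_powers[where K = "{1..t}" and p = p and a = a and r = r and j = j] assms
    by (simp add: atLeast0AtMost)
  have "1 - real j - real r = - real (j + r - 1)"
    "(\<lambda>k. 1 - real (a k) - real j - real r) = (\<lambda>k. - real (a k + j + r - 1))"
    using assms(1) by (auto simp: of_nat_diff)
  then have hypergeom_down: "real (c_iter r j n) / real (d_fun (j + r) n)
      = hypergeom (replicate t (1 - real j - real r) @ [- real j])
          (map (\<lambda>k. 1 - real (a k) - real j - real r) [1..<t+1]) 1"
    by (simp only: shift_down hypergeom_minus_of_nat_params atLeast0AtMost)
  have shift_up: "real (c_iter r j n) / real (d_fun r n)
      = (\<Sum>i=0..j. (-1) ^ (j - i) * real (j choose i) * (\<Prod>k=1..t. real ((a k + i + r - 1) choose i))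
          / real ((i + r - 1) choose i) ^ t)" if "1 \<le> r"
    using c_iter_div_d_fun_prime_powers[where K = "{1..t}" and p = p and a = a and r = r and j = j] assms that
    by (simp add: atLeast0AtMost)
  have "(\<lambda>k. real (a k) + real r) = (\<lambda>k. real (a k + r))"
    by simp
  then have hypergeom_up: "real (c_iter r j n) / real (d_fun r n)
      = (-1) ^ j * hypergeom (map (\<lambda>k. real (a k) + real r) [1..<t+1] @ [- real j])
          (replicate t (real r)) 1" if "1 \<le> r"
    by (simp only: shift_up[OF that] hypergeom_of_nat_params atLeast0AtMost) (simp add: ac_simps)
  show ?thesis
    using shift_down hypergeom_down shift_up hypergeom_up by blast
qed

end
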